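(* Let $p\ge5$ be prime. Then the following graph $G_p$ has no induced regular subgraph of order $p$. (a) If $p=12t+1$, then $G_p=3t\,C_9[K_{6t}]$, which has $\frac98(p-1)^2$ vertices. (b) If $p=12t+5$, then $G_p=(3t+1)\,C_9[K_{6t+2}]$, which has $\frac98(p-1)^2$ vertices. (c) If $p=12t+7$, then $G_p=C_5[K_{6t+3}]\sqcup(3t+1)\,C_9[K_{6t+3}]$, which has $\frac18(p-1)(9p-7)$ vertices. (d) If $p=12t+11$, then $G_p=C_4[K_{6t+5}]\sqcup(3t+2)\,C_9[K_{6t+5}]$, which has $\frac18(p-1)(9p-11)$ vertices. (Here $t\ge0$ is an integer.)
   Context: Graphs are finite and simple; the order of a graph is its number of vertices. $C_r$ is the cycle on $r$ vertices and $K_s$ the complete graph on $s$ vertices. The lexicographic product $G[H]$ has vertex set $V(G)\times V(H)$, with $(a,b)$ adjacent to $(a',b')$ iff $a$ is adjacent to $a'$ in $G$, or $a=a'$ and $b$ is adjacent to $b'$ in $H$. For a graph $G$ and integer $m\ge0$, $mG$ denotes the disjoint union of $m$ copies of $G$, and $\sqcup$ denotes disjoint union. An induced regular subgraph is an induced subgraph in which all vertices have the same degree. *)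

theory Defs
  imports Main "HOL-Computational_Algebra.Primes"
begin

text \<open>A finite simple graph is represented by a vertex set together with a
symmetric, irreflexive adjacency relation (all constructions below produce such).\<close>
type_synonym 'a graph = "'a set \<times> ('a \<Rightarrow> 'a \<Rightarrow> bool)"

definition verts :: "'a graph \<Rightarrow> 'a set" where "verts G = fst G"
definition adj :: "'a graph \<Rightarrow> 'a \<Rightarrow> 'a \<Rightarrow> bool" where "adj G = snd G"

definition cycle_graph :: "nat \<Rightarrow> nat graph" where
  "cycle_graph r = ({0..<r}, \<lambda>i j. i \<noteq> j \<and> (j = (i + 1) mod r \<or> i = (j + 1) mod r))"

definition complete_graph :: "nat \<Rightarrow> nat graph" where
  "complete_graph s = ({0..<s}, \<lambda>i j. i \<noteq> j)"

definition lex_prod :: "'a graph \<Rightarrow> 'b graph \<Rightarrow> ('a \<times> 'b) graph" where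
  "lex_prod G H = (verts G \<times> verts H,
     \<lambda>(a, b) (a', b'). adj G a a' \<or> (a = a' \<and> adj H b b'))"

definition copies :: "nat \<Rightarrow> 'a graph \<Rightarrow> (nat \<times> 'a) graph" where
  "copies m G = ({0..<m} \<times> verts G, \<lambda>(i, x) (j, y). i = j \<and> adj G x y)"

definition disj_union :: "'a graph \<Rightarrow> 'b graph \<Rightarrow> ('a + 'b) graph" where
  "disj_union G H = (Inl ` verts G \<union> Inr ` verts H,
     \<lambda>u v. case (u, v) of
        (Inl x, Inl y) \<Rightarrow> adj G x y
      | (Inr x, Inr y) \<Rightarrow> adj H x y
      | _ \<Rightarrow> False)"

definition induced_regular :: "'a graph \<Rightarrow> 'a set \<Rightarrow> bool" where
  "induced_regular G S = (\<exists>k. \<forall>v\<in>S. card {u \<in> S. adj G v u} = k)"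

definition has_induced_regular_subgraph_of_order :: "'a graph \<Rightarrow> nat \<Rightarrow> bool" where
  "has_induced_regular_subgraph_of_order G n =
     (\<exists>S. S \<subseteq> verts G \<and> card S = n \<and> induced_regular G S)"

end

(*
  Let S induce a k-regular subgraph of order p and put d = k + 1. If S meets a
  component C_r[K_m] in T, let x_j be the number of vertices of T in column j. A
  vertex of T in column j has degree x_(j-1) + x_j + x_(j+1) - 1, so this triple
  sum equals d at every occupied column. If all columns are occupied, summing gives
  3 |T| = r d. Otherwise the occupied columns form runs of length at most two,
  each of total d, so |T| = c d with 2 c <= r, and d <= 2 m once c > 0.

  Hence every C_9 component contributes a multiple of d, and as p is prime either
  d = 1, when there are too few vertices to reach p, or d = p, which forces a
  single run of p <= 2 m < p vertices. The C_5 or C_4 component may contribute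
  r d / 3 instead; then 3 divides d, and primality leaves only p = r (mod 3),
  which the residue of p excludes.
*)
theory Submission
  imports Defs
begin

lemma sum_periodic_window:
  fixes x :: "nat \<Rightarrow> 'a::comm_monoid_add"
  assumes periodic: "\<And>j. x (j mod r) = x j"
  shows "(\<Sum>j = z..<z + r. x j) = (\<Sum>j<r. x j)"
proof (induction z)
  case 0
  show ?case by (simp add: atLeast0LessThan)
next
  case (Suc z)
  have "x (z + r) = x z"
    using periodic[of "z + r"] periodic[of z] by simp
  then have "(\<Sum>j = Suc z..<Suc z + r. x j) = (\<Sum>j = z..<z + r. x j)"
    by (simp add: sum.atLeast_Suc_lessThan sum.atLeastLessThan_Suc add.commute)
  with Suc show ?case by simp
qed

lemma run_after_zero:
  fixes x :: "nat \<Rightarrow> nat"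
  assumes triple: "\<And>j. 0 < x (Suc j) \<Longrightarrow> x j + x (Suc j) + x (j + 2) = d"
    and bound: "\<And>j. x j \<le> m"
    and "x i = 0" "0 < x (Suc i)"
  obtains j where "i + 2 \<le> j" "x j = 0" "\<And>l. i < l \<Longrightarrow> l < j \<Longrightarrow> 0 < x l"
    "(\<Sum>l = i..<j. x l) = d" "d \<le> 2 * m"
proof (cases "x (i + 2) = 0")
  case True
  have "x (Suc i) = d"
    using triple[of i] assms(3,4) True by simp
  then show ?thesis
    using that[of "i + 2"] assms(3,4) True bound[of "Suc i"]
    by (fastforce simp: less_Suc_eq numeral_2_eq_2)
next
  case False
  have arc: "x (Suc i) + x (i + 2) = d"
    using triple[of i] assms(3,4) by simp
  then have "x (i + 3) = 0"
    using triple[of "Suc i"] False by (simp add: numeral_3_eq_3 numeral_2_eq_2)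
  moreover have "\<And>l. i < l \<Longrightarrow> l < i + 3 \<Longrightarrow> 0 < x l"
    using assms(4) False by (auto simp: numeral_3_eq_3 numeral_2_eq_2 less_Suc_eq)
  moreover have "(\<Sum>l = i..<i + 3. x l) = d"
    using arc assms(3) by (simp add: numeral_3_eq_3 numeral_2_eq_2)
  moreover have "d \<le> 2 * m"
    using arc bound[of "Suc i"] bound[of "i + 2"] by linarith
  ultimately show ?thesis
    using that[of "i + 3"] by simp
qed

lemma sum_between_zeros:
  fixes x :: "nat \<Rightarrow> nat"
  assumes triple: "\<And>j. 0 < x (Suc j) \<Longrightarrow> x j + x (Suc j) + x (j + 2) = d"
    and bound: "\<And>j. x j \<le> m"
    and "x i = 0" "x n = 0" "i \<le> n"
  shows "\<exists>c. (\<Sum>j = i..<n. x j) = c * d \<and> 2 * c \<le> n - i \<and> (0 < c \<longrightarrow> d \<le> 2 * m)"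
  using assms(3-5)
proof (induction "n - i" arbitrary: i rule: less_induct)
  case less
  consider "i = n" | "i < n" "x (Suc i) = 0" | "i < n" "0 < x (Suc i)"
    using less.prems by linarith
  then show ?case
  proof cases
    case 1
    then show ?thesis by (intro exI[of _ 0]) simp
  next
    case 2
    moreover have "n - Suc i < n - i" "Suc i \<le> n"
      using 2 by auto
    ultimately obtain c where
      "(\<Sum>j = Suc i..<n. x j) = c * d" "2 * c \<le> n - Suc i" "0 < c \<longrightarrow> d \<le> 2 * m"
      using less.hyps[of "Suc i"] less.prems by blast
    with 2 less.prems show ?thesis
      by (intro exI[of _ c]) (simp add: sum.atLeast_Suc_lessThan)
  next
    case 3
    obtain j where j: "i + 2 \<le> j" "x j = 0" "\<And>l. i < l \<Longrightarrow> l < j \<Longrightarrow> 0 < x l"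
      "(\<Sum>l = i..<j. x l) = d" "d \<le> 2 * m"
      using run_after_zero[OF triple bound \<open>x i = 0\<close> \<open>0 < x (Suc i)\<close>] by blast
    have "j \<le> n"
      using j(3)[of n] \<open>i < n\<close> \<open>x n = 0\<close> by (cases "n < j") auto
    moreover have "n - j < n - i"
      using j(1) \<open>i < n\<close> by simp
    ultimately obtain c where "(\<Sum>l = j..<n. x l) = c * d" "2 * c \<le> n - j"
      using less.hyps[of j] j(2) less.prems by blast
    moreover have "(\<Sum>l = i..<n. x l) = (\<Sum>l = i..<j. x l) + (\<Sum>l = j..<n. x l)"
      using j(1) \<open>j \<le> n\<close> by (simp add: sum.atLeastLessThan_concat)
    ultimately show ?thesis
      using j \<open>j \<le> n\<close> by (intro exI[of _ "Suc c"]) simp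
  qed
qed

lemma periodic_triple_sum_cases:
  fixes x :: "nat \<Rightarrow> nat"
  assumes periodic: "\<And>j. x (j mod r) = x j"
    and triple: "\<And>j. 0 < x (Suc j) \<Longrightarrow> x j + x (Suc j) + x (j + 2) = d"
    and bound: "\<And>j. x j \<le> m"
  shows "3 * (\<Sum>j<r. x j) = r * d \<or>
    (\<exists>c. (\<Sum>j<r. x j) = c * d \<and> 2 * c \<le> r \<and> (0 < c \<longrightarrow> d \<le> 2 * m))"
proof -
  consider (empty) "r = 0" | (zero) z where "x z = 0" | (positive) "0 < r" "\<forall>z<r. 0 < x z"
    by blast
  then show ?thesis
  proof cases
    case empty
    then show ?thesis by simp
  next
    case zero
    moreover have "x (z + r) = x z"
      using periodic[of "z + r"] periodic[of z] by simp
    ultimately show ?thesis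
      using sum_between_zeros[OF triple bound, of z "z + r"] sum_periodic_window[where x=x, OF periodic]
      by simp
  next
    case positive
    have shift: "(\<Sum>j<r. x (j + k)) = (\<Sum>j<r. x j)" for k
      using sum.shift_bounds_nat_ivl[of x 0 k r] sum_periodic_window[where x=x, OF periodic, of k]
      by (simp add: atLeast0LessThan add.commute)
    have "0 < x (Suc j)" for j
      using positive periodic[of "Suc j"] mod_less_divisor[of r "Suc j"] by metis
    then have "(\<Sum>j<r. x j + x (j + 1) + x (j + 2)) = r * d"
      using triple by simp
    then show ?thesis
      using shift[of 1] shift[of 2] by (simp add: sum.distrib)
  qed
qed

lemma verts_lex_prod [simp]: "verts (lex_prod G H) = verts G \<times> verts H"
  by (simp add: lex_prod_def verts_def)

lemma adj_lex_prod [simp]: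
  "adj (lex_prod G H) (a, b) (a', b') \<longleftrightarrow> adj G a a' \<or> (a = a' \<and> adj H b b')"
  by (simp add: lex_prod_def adj_def)

lemma verts_cycle_graph [simp]: "verts (cycle_graph r) = {0..<r}"
  by (simp add: cycle_graph_def verts_def)

lemma verts_complete_graph [simp]: "verts (complete_graph s) = {0..<s}"
  by (simp add: complete_graph_def verts_def)

lemma adj_complete_graph [simp]: "adj (complete_graph s) i j \<longleftrightarrow> i \<noteq> j"
  by (simp add: complete_graph_def adj_def)

lemma verts_copies [simp]: "verts (copies n G) = {0..<n} \<times> verts G"
  by (simp add: copies_def verts_def)

lemma adj_copies [simp]: "adj (copies n G) (i, x) (j, y) \<longleftrightarrow> i = j \<and> adj G x y"
  by (simp add: copies_def adj_def)

lemma verts_disj_union [simp]: "verts (disj_union G H) = verts G <+> verts H"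
  by (simp add: disj_union_def verts_def Plus_def)

lemma adj_disj_union [simp]:
  "adj (disj_union G H) (Inl x) (Inl x') \<longleftrightarrow> adj G x x'"
  "adj (disj_union G H) (Inr y) (Inr y') \<longleftrightarrow> adj H y y'"
  "\<not> adj (disj_union G H) (Inl x) (Inr y)"
  "\<not> adj (disj_union G H) (Inr y) (Inl x)"
  by (simp_all add: disj_union_def adj_def)

lemma adj_cycle_graph_Suc_mod:
  assumes "3 \<le> r" "a < r"
  shows "adj (cycle_graph r) (Suc j mod r) a \<longleftrightarrow> a = j mod r \<or> a = (j + 2) mod r"
proof -
  have "adj (cycle_graph r) (Suc j mod r) a \<longleftrightarrow>
      Suc j mod r \<noteq> a \<and> (a = Suc (Suc j mod r) mod r \<or> Suc j mod r = Suc a mod r)"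
    by (simp add: cycle_graph_def adj_def)
  moreover have "Suc j mod r = Suc a mod r \<longleftrightarrow> a = j mod r"
    using assms by (auto simp: mod_Suc split: if_splits)
  moreover have "Suc (Suc j mod r) mod r = (j + 2) mod r"
    by (simp add: mod_Suc_eq)
  moreover have "Suc j mod r \<noteq> j mod r" "Suc j mod r \<noteq> (j + 2) mod r"
    using assms by (simp_all add: mod_Suc)
  ultimately show ?thesis
    by auto
qed

definition regular_on :: "'a graph \<Rightarrow> nat \<Rightarrow> 'a set \<Rightarrow> bool" where
  "regular_on G k S \<longleftrightarrow> (\<forall>v\<in>S. card {u \<in> S. adj G v u} = k)"

lemma has_induced_regular_subgraph_of_order_iff:
  "has_induced_regular_subgraph_of_order G n \<longleftrightarrow>
    (\<exists>S k. S \<subseteq> verts G \<and> card S = n \<and> regular_on G k S)"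
  by (auto simp: has_induced_regular_subgraph_of_order_def induced_regular_def regular_on_def)

lemma regular_on_copies:
  assumes "regular_on (copies n G) k S"
  shows "regular_on G k (S `` {i})"
  unfolding regular_on_def
proof
  fix x assume "x \<in> S `` {i}"
  then have "card {u \<in> S. adj (copies n G) (i, x) u} = k"
    using assms by (auto simp: regular_on_def)
  moreover have "{u \<in> S. adj (copies n G) (i, x) u} = Pair i ` {y \<in> S `` {i}. adj G x y}"
    by auto
  ultimately show "card {y \<in> S `` {i}. adj G x y} = k"
    by (simp add: card_image inj_on_def)
qed

lemma regular_on_disj_union:
  assumes "regular_on (disj_union G H) k S"
  shows "regular_on G k (Inl -` S)" "regular_on H k (Inr -` S)"
proof -
  have "{u \<in> S. adj (disj_union G H) (Inl x) u} = Inl ` {y \<in> Inl -` S. adj G x y}" for x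
  proof -
    have "adj (disj_union G H) (Inl x) u \<longleftrightarrow> (\<exists>y. u = Inl y \<and> adj G x y)" for u
      by (cases u) auto
    then show ?thesis by auto
  qed
  moreover have "{u \<in> S. adj (disj_union G H) (Inr y) u} = Inr ` {y' \<in> Inr -` S. adj H y y'}" for y
  proof -
    have "adj (disj_union G H) (Inr y) u \<longleftrightarrow> (\<exists>y'. u = Inr y' \<and> adj H y y')" for u
      by (cases u) auto
    then show ?thesis by auto
  qed
  ultimately show "regular_on G k (Inl -` S)" "regular_on H k (Inr -` S)"
    using assms by (auto simp: regular_on_def card_image)
qed

lemma card_eq_sum_card_Image:
  assumes "S \<subseteq> A \<times> B" "finite A" "finite B"
  shows "card S = (\<Sum>a\<in>A. card (S `` {a}))"
proof -
  have "S = Sigma A (\<lambda>a. S `` {a})"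
    using assms(1) by auto
  moreover have "finite (S `` {a})" for a
    using assms(1,3) by (auto intro: finite_subset)
  ultimately show ?thesis
    using assms(2) by (metis card_SigmaI)
qed

lemma card_eq_card_vimage_Inl_Inr:
  assumes "finite S"
  shows "card S = card (Inl -` S) + card (Inr -` S)"
proof -
  have "x \<in> Inl -` S <+> Inr -` S" if "x \<in> S" for x
    using that by (cases x) auto
  then have "S = Inl -` S <+> Inr -` S"
    by auto
  moreover have "finite (Inl -` S)" "finite (Inr -` S)"
    using assms by (auto intro: finite_vimageI)
  ultimately show ?thesis
    by (metis card_Plus)
qed

(* The vertex is placed in column Suc j mod r so that its neighbouring columns are
   j mod r and (j + 2) mod r, avoiding truncated subtraction. *)
lemma card_neighbours_cycle_lex_complete:
  fixes r m :: nat and T :: "(nat \<times> nat) set"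
  defines "G \<equiv> lex_prod (cycle_graph r) (complete_graph m)"
  assumes r: "3 \<le> r" and T: "T \<subseteq> verts G" and b: "(Suc j mod r, b) \<in> T"
  shows "card {u \<in> T. adj G (Suc j mod r, b) u} + 1 =
    card (T `` {j mod r}) + card (T `` {Suc j mod r}) + card (T `` {(j + 2) mod r})"
proof -
  define a where "a = Suc j mod r"
  have distinct: "j mod r \<noteq> a" "(j + 2) mod r \<noteq> a" "j mod r \<noteq> (j + 2) mod r"
    using r by (simp_all add: a_def mod_Suc)
  have finite_column: "finite (T `` {c})" for c
    using T by (auto simp: G_def intro: finite_subset[of _ "{0..<m}"])
  have "{u \<in> T. adj G (a, b) u} =
      {j mod r} \<times> T `` {j mod r} \<union> {(j + 2) mod r} \<times> T `` {(j + 2) mod r} \<union> {a} \<times> (T `` {a} - {b})"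
    using T distinct r by (auto simp: G_def a_def adj_cycle_graph_Suc_mod)
  also have "card \<dots> = card (T `` {j mod r}) + card (T `` {(j + 2) mod r}) + card (T `` {a} - {b})"
    using distinct finite_column
    by (subst card_Un_disjoint, auto)+
  finally have "card {u \<in> T. adj G (a, b) u} =
      card (T `` {j mod r}) + card (T `` {(j + 2) mod r}) + card (T `` {a} - {b})" .
  moreover have "card (T `` {a} - {b}) + 1 = card (T `` {a})"
    using b finite_column[of a] card.remove[of "T `` {a}" b] by (simp add: a_def)
  ultimately show ?thesis
    by (simp add: a_def)
qed

lemma card_regular_on_cycle_lex_complete:
  fixes r m k :: nat and T :: "(nat \<times> nat) set"
  defines "G \<equiv> lex_prod (cycle_graph r) (complete_graph m)"
  assumes r: "3 \<le> r" and T: "T \<subseteq> verts G" and regular: "regular_on G k T"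
  shows "3 * card T = r * (k + 1) \<or>
    (\<exists>c. card T = c * (k + 1) \<and> 2 * c \<le> r \<and> (0 < c \<longrightarrow> k + 1 \<le> 2 * m))"
proof -
  define x where "x j = card (T `` {j mod r})" for j
  have periodic: "x (j mod r) = x j" for j
    by (simp add: x_def)
  have column_subset: "T `` {c} \<subseteq> {0..<m}" for c
    using T by (auto simp: G_def)
  have triple: "x j + x (Suc j) + x (j + 2) = k + 1" if "0 < x (Suc j)" for j
  proof -
    have "T `` {Suc j mod r} \<noteq> {}"
      using that by (auto simp: x_def)
    then obtain b where "(Suc j mod r, b) \<in> T"
      by blast
    then show ?thesis
      using card_neighbours_cycle_lex_complete[OF r T[unfolded G_def]] regular
      by (simp add: G_def x_def regular_on_def)
  qed
  have bound: "x j \<le> m" for j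
    using card_mono[OF _ column_subset] by (simp add: x_def)
  have "card T = (\<Sum>j<r. card (T `` {j}))"
    using card_eq_sum_card_Image[of T "{..<r}" "{0..<m}"] T by (simp add: G_def atLeast0LessThan)
  also have "\<dots> = (\<Sum>j<r. x j)"
    by (simp add: x_def)
  finally show ?thesis
    using periodic_triple_sum_cases[of x r "k + 1" m] periodic triple bound by presburger
qed

lemma sum_of_bounded_multiples:
  assumes "finite I" "\<forall>i\<in>I. \<exists>c\<le>C. s i = c * d \<and> (c = 1 \<longrightarrow> P)"
  shows "\<exists>N. sum s I = N * d \<and> N \<le> C * card I \<and> (N = 1 \<longrightarrow> P)"
  using assms
proof (induction I rule: finite_induct)
  case empty
  show ?case by simp
next
  case (insert i I)
  then obtain N where N: "sum s I = N * d" "N \<le> C * card I" "N = 1 \<longrightarrow> P"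
    by blast
  obtain c where c: "c \<le> C" "s i = c * d" "c = 1 \<longrightarrow> P"
    using insert.prems by blast
  have "c + N = 1 \<longrightarrow> P"
    using c(3) N(3) by (cases c) auto
  then show ?case
    using insert.hyps N c by (intro exI[of _ "c + N"]) (simp add: algebra_simps)
qed

lemma card_regular_on_copies_cycle_lex_complete:
  fixes n r m k :: nat and S :: "(nat \<times> nat \<times> nat) set"
  defines "G \<equiv> copies n (lex_prod (cycle_graph r) (complete_graph m))"
  assumes r: "3 dvd r" "3 < r" and S: "S \<subseteq> verts G" and regular: "regular_on G k S"
  shows "\<exists>N. card S = N * (k + 1) \<and> N \<le> r div 2 * n \<and> (N = 1 \<longrightarrow> k + 1 \<le> 2 * m)"
proof -
  have "\<exists>c\<le>r div 2. card (S `` {i}) = c * (k + 1) \<and> (c = 1 \<longrightarrow> k + 1 \<le> 2 * m)" for i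
  proof -
    have "S `` {i} \<subseteq> verts (lex_prod (cycle_graph r) (complete_graph m))"
      using S by (auto simp: G_def)
    then consider "3 * card (S `` {i}) = r * (k + 1)"
      | c where "card (S `` {i}) = c * (k + 1)" "2 * c \<le> r" "0 < c \<longrightarrow> k + 1 \<le> 2 * m"
      using card_regular_on_cycle_lex_complete r(2) regular_on_copies regular
      unfolding G_def by (metis less_imp_le)
    then show ?thesis
    proof cases
      case 1
      then have "card (S `` {i}) = r div 3 * (k + 1)"
        using r(1) by auto
      (* this is where r = 3 must be excluded: C_3[K_m] is complete *)
      moreover have "r div 3 \<noteq> 1" "r div 3 \<le> r div 2"
        using r by (auto simp: div_le_mono2)
      ultimately show ?thesis
        by blast
    next
      case 2
      then show ?thesis
        by (intro exI[of _ c]) auto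
    qed
  qed
  then have "\<exists>N. (\<Sum>i<n. card (S `` {i})) = N * (k + 1) \<and> N \<le> r div 2 * card {..<n} \<and>
      (N = 1 \<longrightarrow> k + 1 \<le> 2 * m)"
    by (intro sum_of_bounded_multiples) auto
  moreover have "card S = (\<Sum>i<n. card (S `` {i}))"
    using S card_eq_sum_card_Image[of S "{..<n}"] by (simp add: G_def atLeast0LessThan)
  ultimately show ?thesis
    by simp
qed

lemma no_regular_subgraph_of_prime_order_copies:
  fixes p n r m :: nat
  defines "G \<equiv> copies n (lex_prod (cycle_graph r) (complete_graph m))"
  assumes p: "prime p" and r: "3 dvd r" "3 < r" and small: "2 * m < p" "r div 2 * n < p"
  shows "\<not> has_induced_regular_subgraph_of_order G p"
proof
  assume "has_induced_regular_subgraph_of_order G p"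
  then obtain S k where "S \<subseteq> verts G" "card S = p" "regular_on G k S"
    by (auto simp: has_induced_regular_subgraph_of_order_iff)
  then obtain N where N: "p = N * (k + 1)" "N \<le> r div 2 * n" "N = 1 \<longrightarrow> k + 1 \<le> 2 * m"
    using card_regular_on_copies_cycle_lex_complete[OF r] unfolding G_def by metis
  then have "N = 1 \<or> k + 1 = 1"
    using p prime_product by blast
  then show False
    using N small by auto
qed

lemma no_regular_subgraph_of_prime_order_disj_union_copies:
  fixes p r0 m0 n r m :: nat
  defines "G \<equiv> disj_union (lex_prod (cycle_graph r0) (complete_graph m0))
      (copies n (lex_prod (cycle_graph r) (complete_graph m)))"
  assumes p: "prime p" and r0: "3 \<le> r0" "\<not> 3 dvd r0" "p mod 3 \<noteq> r0 mod 3"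
    and r: "3 dvd r" "3 < r"
    and small: "2 * m0 < p" "2 * m < p" "r0 div 2 + r div 2 * n < p"
  shows "\<not> has_induced_regular_subgraph_of_order G p"
proof
  assume "has_induced_regular_subgraph_of_order G p"
  then obtain S k where S: "S \<subseteq> verts G" "card S = p" and regular: "regular_on G k S"
    by (auto simp: has_induced_regular_subgraph_of_order_iff)
  have "finite S"
    using S(1) by (auto simp: G_def intro: finite_subset)
  then have p_split: "p = card (Inl -` S) + card (Inr -` S)"
    using S(2) card_eq_card_vimage_Inl_Inr by metis
  obtain N where N: "card (Inr -` S) = N * (k + 1)" "N \<le> r div 2 * n" "N = 1 \<longrightarrow> k + 1 \<le> 2 * m"
    using card_regular_on_copies_cycle_lex_complete[OF r, of "Inr -` S" n m k]
      S(1) regular_on_disj_union(2)[OF regular[unfolded G_def]] by (auto simp: G_def)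
  have "Inl -` S \<subseteq> verts (lex_prod (cycle_graph r0) (complete_graph m0))"
    using S(1) by (auto simp: G_def)
  then have "3 * card (Inl -` S) = r0 * (k + 1) \<or>
      (\<exists>c. card (Inl -` S) = c * (k + 1) \<and> 2 * c \<le> r0 \<and> (0 < c \<longrightarrow> k + 1 \<le> 2 * m0))"
    using card_regular_on_cycle_lex_complete[OF r0(1)]
      regular_on_disj_union(1)[OF regular[unfolded G_def]] by blast
  then consider "3 * card (Inl -` S) = r0 * (k + 1)"
    | c where "card (Inl -` S) = c * (k + 1)" "2 * c \<le> r0" "0 < c \<longrightarrow> k + 1 \<le> 2 * m0"
    by blast
  then show False
  proof cases
    case 1
    then have "3 dvd r0 * (k + 1)"
      by (metis dvd_triv_left)
    moreover have "prime (3::nat)"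
      by simp
    ultimately have "3 dvd k + 1"
      using r0(2) prime_dvd_mult_iff by blast
    then obtain a where a: "k + 1 = 3 * a"
      by blast
    then have "p = a * (r0 + 3 * N)"
      using 1 p_split N(1) by (simp add: algebra_simps)
    then have "a = 1 \<or> r0 + 3 * N = 1"
      using p prime_product by blast
    then show False
      using \<open>p = a * (r0 + 3 * N)\<close> r0 by auto
  next
    case 2
    then have "p = (c + N) * (k + 1)"
      using p_split N(1) by (simp add: algebra_simps)
    then have "c + N = 1 \<or> k + 1 = 1"
      using p prime_product by blast
    then show False
      using \<open>p = (c + N) * (k + 1)\<close> 2 N small by (auto simp: add_is_1)
  qed
qed

theorem theorem7:
  fixes p :: nat
  assumes "prime p" and "p \<ge> 5"
  shows
   "(\<forall>t. p = 12*t + 1 \<longrightarrow>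
      (let G = copies (3*t) (lex_prod (cycle_graph 9) (complete_graph (6*t))) in
        \<not> has_induced_regular_subgraph_of_order G p \<and>
        8 * card (verts G) = 9 * (p - 1)^2)) \<and>
    (\<forall>t. p = 12*t + 5 \<longrightarrow>
      (let G = copies (3*t+1) (lex_prod (cycle_graph 9) (complete_graph (6*t+2))) in
        \<not> has_induced_regular_subgraph_of_order G p \<and>
        8 * card (verts G) = 9 * (p - 1)^2)) \<and>
    (\<forall>t. p = 12*t + 7 \<longrightarrow>
      (let G = disj_union (lex_prod (cycle_graph 5) (complete_graph (6*t+3)))
                 (copies (3*t+1) (lex_prod (cycle_graph 9) (complete_graph (6*t+3)))) in
        \<not> has_induced_regular_subgraph_of_order G p \<and>
        8 * card (verts G) = (p - 1) * (9*p - 7))) \<and>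
    (\<forall>t. p = 12*t + 11 \<longrightarrow>
      (let G = disj_union (lex_prod (cycle_graph 4) (complete_graph (6*t+5)))
                 (copies (3*t+2) (lex_prod (cycle_graph 9) (complete_graph (6*t+5)))) in
        \<not> has_induced_regular_subgraph_of_order G p \<and>
        8 * card (verts G) = (p - 1) * (9*p - 11)))"
proof (intro conjI allI impI, goal_cases)
  case (1 t)
  then show ?case
    unfolding Let_def
    by (intro conjI no_regular_subgraph_of_prime_order_copies[OF assms(1)];
        simp add: card_cartesian_product power2_eq_square)
next
  case (2 t)
  then show ?case
    unfolding Let_def
    by (intro conjI no_regular_subgraph_of_prime_order_copies[OF assms(1)];
        simp add: card_cartesian_product power2_eq_square algebra_simps)
next
  case (3 t)
  then show ?case
    unfolding Let_def
    by (intro conjI no_regular_subgraph_of_prime_order_disj_union_copies[OF assms(1)];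
        simp add: card_cartesian_product card_Plus algebra_simps; presburger)
next
  case (4 t)
  then show ?case
    unfolding Let_def
    by (intro conjI no_regular_subgraph_of_prime_order_disj_union_copies[OF assms(1)];
        simp add: card_cartesian_product card_Plus algebra_simps; presburger)
qed

end
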